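(* Let $H$ be a complex separable Hilbert space and let $\mathcal{G}$ be a countable group of unitary operators on $H$. Let $M$ and $K$ be wandering subspaces of $H$ for $\mathcal{G}$. If $\sum_{g \in \mathcal{G}} \oplus^{\perp} g(M) \subseteq \sum_{g \in \mathcal{G}} \oplus^{\perp} g(K)$, then $\dim(M) \le \dim(K)$.
   Context: A closed linear subspace $M$ of $H$ is a wandering subspace for a set $\mathcal{U}$ of unitary operators (containing the identity) if $U(M) \perp V(M)$ for all $U, V \in \mathcal{U}$ with $U \neq V$. For a wandering subspace $M$, $\sum_{g \in \mathcal{G}} \oplus^{\perp} g(M)$ denotes the closed orthogonal direct sum of the mutually orthogonal subspaces $g(M)$, $g \in \mathcal{G}$. *)

theory Defs
  imports "HOL-Analysis.Analysis"
begin

text \<open>The underlying normed space structure (norm, metric, topology) is that of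
  real_normed_vector; the complex scalar multiplication extends the real one and the
  norm is induced by the complex inner product (linear in the second argument,
  conjugate linear in the first).\<close>

class complex_inner = real_normed_vector +
  fixes scaleC :: "complex \<Rightarrow> 'a \<Rightarrow> 'a" (infixr "*\<^sub>C" 75)
    and cinner :: "'a \<Rightarrow> 'a \<Rightarrow> complex"
  assumes scaleC_add_right: "a *\<^sub>C (x + y) = a *\<^sub>C x + a *\<^sub>C y"
    and scaleC_add_left: "(a + b) *\<^sub>C x = a *\<^sub>C x + b *\<^sub>C x"
    and scaleC_scaleC: "a *\<^sub>C (b *\<^sub>C x) = (a * b) *\<^sub>C x"
    and scaleC_one: "1 *\<^sub>C x = x"
    and scaleR_scaleC: "scaleR r x = complex_of_real r *\<^sub>C x"
    and cinner_commute: "cinner x y = cnj (cinner y x)"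
    and cinner_add_left: "cinner (x + y) z = cinner x z + cinner y z"
    and cinner_scaleC_left: "cinner (a *\<^sub>C x) y = cnj a * cinner x y"
    and cinner_self_norm: "cinner x x = complex_of_real ((norm x)\<^sup>2)"

class chilbert_space = complex_inner + complete_space

definition separable_space :: "'a::topological_space itself \<Rightarrow> bool" where
  "separable_space _ \<longleftrightarrow> (\<exists>D::'a set. countable D \<and> closure D = UNIV)"

definition clinear :: "('a::complex_inner \<Rightarrow> 'b::complex_inner) \<Rightarrow> bool" where
  "clinear f \<longleftrightarrow> (\<forall>x y. f (x + y) = f x + f y) \<and> (\<forall>a x. f (a *\<^sub>C x) = a *\<^sub>C f x)"

definition unitary :: "('a::complex_inner \<Rightarrow> 'a) \<Rightarrow> bool" where
  "unitary U \<longleftrightarrow> clinear U \<and> (\<forall>x y. cinner (U x) (U y) = cinner x y) \<and> surj U"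

definition unitary_group :: "('a::complex_inner \<Rightarrow> 'a) set \<Rightarrow> bool" where
  "unitary_group G \<longleftrightarrow> (\<forall>U\<in>G. unitary U) \<and> id \<in> G
     \<and> (\<forall>U\<in>G. \<forall>V\<in>G. U \<circ> V \<in> G) \<and> (\<forall>U\<in>G. inv U \<in> G)"

definition csubspace :: "'a::complex_inner set \<Rightarrow> bool" where
  "csubspace M \<longleftrightarrow> 0 \<in> M \<and> (\<forall>x\<in>M. \<forall>y\<in>M. x + y \<in> M) \<and> (\<forall>a. \<forall>x\<in>M. a *\<^sub>C x \<in> M)"

definition closed_csubspace :: "'a::complex_inner set \<Rightarrow> bool" where
  "closed_csubspace M \<longleftrightarrow> csubspace M \<and> closed M"

definition ccspan :: "'a::complex_inner set \<Rightarrow> 'a set" where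
  "ccspan S = \<Inter>{N. closed_csubspace N \<and> S \<subseteq> N}"

definition orthogonal_sets :: "'a::complex_inner set \<Rightarrow> 'a set \<Rightarrow> bool" where
  "orthogonal_sets A B \<longleftrightarrow> (\<forall>x\<in>A. \<forall>y\<in>B. cinner x y = 0)"

definition wandering_subspace :: "('a::complex_inner \<Rightarrow> 'a) set \<Rightarrow> 'a set \<Rightarrow> bool" where
  "wandering_subspace \<U> M \<longleftrightarrow> closed_csubspace M
     \<and> (\<forall>U\<in>\<U>. \<forall>V\<in>\<U>. U \<noteq> V \<longrightarrow> orthogonal_sets (U ` M) (V ` M))"

text \<open>Closed orthogonal direct sum of the mutually orthogonal subspaces g(M), g in G
  (for wandering M this is the closed span of their union).\<close>
definition orth_sum :: "('a::complex_inner \<Rightarrow> 'a) set \<Rightarrow> 'a set \<Rightarrow> 'a set" where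
  "orth_sum G M = ccspan (\<Union>g\<in>G. g ` M)"

definition orthonormal :: "'a::complex_inner set \<Rightarrow> bool" where
  "orthonormal B \<longleftrightarrow> (\<forall>x\<in>B. cinner x x = 1) \<and> (\<forall>x\<in>B. \<forall>y\<in>B. x \<noteq> y \<longrightarrow> cinner x y = 0)"

text \<open>Orthonormal basis of a closed subspace M (the Hilbert dimension of M is its cardinality).\<close>
definition orthonormal_basis :: "'a::complex_inner set \<Rightarrow> 'a set \<Rightarrow> bool" where
  "orthonormal_basis B M \<longleftrightarrow> B \<subseteq> M \<and> orthonormal B \<and> ccspan B = M"

end

theory Submission
  imports Defs
begin

(* Let BM, BK be orthonormal bases of M and K. If BK is infinite, separability makes BM countable
   and it injects into BK. If BK is finite, the vectors g f (g in G, f in BK) form an orthonormal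
   family whose closed span contains the orbit sum of K, hence M. For a finite S contained in BM,
   Parseval's identity for this family gives
     card S = sum over e in S, g in G, f in BK of |<g f, e>|^2,
   and for fixed f the inner double sum equals the sum of |<g^-1 e, f>|^2, which is at most
   |f|^2 = 1 by Bessel's inequality, because the vectors g^-1 e are orthonormal (M is wandering).
   So card S <= card BK. To stay with finite sums, Parseval's identity is replaced by the
   inequality card S <= (finite part of the sum) + epsilon, from finite approximations of each e. *)

lemma scaleC_zero_left [simp]: "0 *\<^sub>C x = (0::'a::complex_inner)"
  using scaleC_add_left[of 0 0 x] by simp

lemma scaleC_zero_right [simp]: "a *\<^sub>C 0 = (0::'a::complex_inner)"
  using scaleC_add_right[of a 0 0] by simp

lemma scaleC_sum_right: "a *\<^sub>C sum f A = (\<Sum>i\<in>A. a *\<^sub>C (f i::'a::complex_inner))"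
  by (induct A rule: infinite_finite_induct) (simp_all add: scaleC_add_right)

lemma cinner_zero_left [simp]: "cinner 0 (y::'a::complex_inner) = 0"
  using cinner_add_left[of 0 0 y] by simp

lemma cinner_zero_right [simp]: "cinner (y::'a::complex_inner) 0 = 0"
  using cinner_commute[of y 0] by simp

lemma cinner_diff_left: "cinner (x - y) (z::'a::complex_inner) = cinner x z - cinner y z"
  using cinner_add_left[of "x - y" y z] by (simp add: algebra_simps)

lemma cinner_add_right: "cinner x (y + z) = cinner x y + cinner x (z::'a::complex_inner)"
  by (metis cinner_add_left cinner_commute complex_cnj_add)

lemma cinner_diff_right: "cinner x (y - z) = cinner x y - cinner x (z::'a::complex_inner)"
  by (metis cinner_diff_left cinner_commute complex_cnj_diff)

lemma cinner_scaleC_right: "cinner x (a *\<^sub>C y) = a * cinner x (y::'a::complex_inner)"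
  by (metis cinner_scaleC_left cinner_commute complex_cnj_cnj complex_cnj_mult)

lemma cinner_sum_left: "cinner (sum f A) (y::'a::complex_inner) = (\<Sum>i\<in>A. cinner (f i) y)"
  by (induct A rule: infinite_finite_induct) (simp_all add: cinner_add_left)

lemma cinner_sum_right: "cinner y (sum f A) = (\<Sum>i\<in>A. cinner (y::'a::complex_inner) (f i))"
  by (induct A rule: infinite_finite_induct) (simp_all add: cinner_add_right)

lemma power2_norm_eq_cinner: "(norm x)\<^sup>2 = Re (cinner x (x::'a::complex_inner))"
  by (simp add: cinner_self_norm)

lemma norm_scaleC: "norm (a *\<^sub>C x) = cmod a * norm (x::'a::complex_inner)"
proof -
  have "cinner (a *\<^sub>C x) (a *\<^sub>C x) = (cnj a * a) * cinner x x"
    by (simp add: cinner_scaleC_left cinner_scaleC_right)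
  also have "\<dots> = complex_of_real ((cmod a * norm x)\<^sup>2)"
    by (simp add: cinner_self_norm complex_norm_square[symmetric] power_mult_distrib mult.commute)
  finally have "(norm (a *\<^sub>C x))\<^sup>2 = (cmod a * norm x)\<^sup>2"
    by (simp add: power2_norm_eq_cinner)
  then show ?thesis by (simp add: power2_eq_imp_eq)
qed

lemma bounded_linear_scaleC_right: "bounded_linear (\<lambda>x::'a::complex_inner. a *\<^sub>C x)"
proof (rule bounded_linear_intro)
  show "a *\<^sub>C (x + y) = a *\<^sub>C x + a *\<^sub>C y" for x y :: 'a
    by (rule scaleC_add_right)
  show "a *\<^sub>C (r *\<^sub>R x) = r *\<^sub>R (a *\<^sub>C x)" for r and x :: 'a
    by (simp add: scaleR_scaleC scaleC_scaleC mult.commute)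
  show "norm (a *\<^sub>C x) \<le> norm x * cmod a" for x :: 'a
    by (simp add: norm_scaleC)
qed

lemma cmod_power2_eq_Re: "(cmod z)\<^sup>2 = Re (cnj z * z)"
  by (metis Re_complex_of_real complex_norm_square mult.commute)

definition orthonormal_family :: "('i \<Rightarrow> 'a::complex_inner) \<Rightarrow> 'i set \<Rightarrow> bool" where
  "orthonormal_family v I \<longleftrightarrow> (\<forall>i\<in>I. \<forall>j\<in>I. cinner (v i) (v j) = (if i = j then 1 else 0))"

lemma orthonormal_family_subset:
  "orthonormal_family v I \<Longrightarrow> J \<subseteq> I \<Longrightarrow> orthonormal_family v J"
  unfolding orthonormal_family_def by blast

lemma norm_diff_combination_power2:
  fixes v :: "'i \<Rightarrow> 'a::complex_inner"
  assumes on: "orthonormal_family v I" and fin: "finite I"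
  shows "(norm (x - (\<Sum>i\<in>I. c i *\<^sub>C v i)))\<^sup>2 =
     (norm x)\<^sup>2 + (\<Sum>i\<in>I. (cmod (c i - cinner (v i) x))\<^sup>2 - (cmod (cinner (v i) x))\<^sup>2)"
proof -
  define s where "s = (\<Sum>i\<in>I. c i *\<^sub>C v i)"
  define a where "a i = cinner (v i) x" for i
  have sx: "cinner s x = (\<Sum>i\<in>I. cnj (c i) * a i)"
    by (simp add: s_def a_def cinner_sum_left cinner_scaleC_left)
  have xs: "cinner x s = (\<Sum>i\<in>I. c i * cnj (a i))"
    by (simp add: s_def a_def cinner_sum_right cinner_scaleC_right) (metis cinner_commute)
  have "cinner s s = (\<Sum>i\<in>I. \<Sum>j\<in>I. cnj (c i) * (c j * cinner (v i) (v j)))"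
    unfolding s_def cinner_sum_left
    by (simp add: cinner_sum_right cinner_scaleC_left cinner_scaleC_right sum_distrib_left
        mult.left_commute)
  also have "\<dots> = (\<Sum>i\<in>I. \<Sum>j\<in>I. if i = j then cnj (c i) * c i else 0)"
    using on by (intro sum.cong refl) (simp add: orthonormal_family_def)
  also have "\<dots> = (\<Sum>i\<in>I. cnj (c i) * c i)"
    using fin by simp
  finally have ss: "cinner s s = (\<Sum>i\<in>I. cnj (c i) * c i)" .
  have "cinner (x - s) (x - s) = cinner x x + (\<Sum>i\<in>I. cnj (c i - a i) * (c i - a i) - cnj (a i) * a i)"
    by (simp add: cinner_diff_left cinner_diff_right sx xs ss sum_subtractf[symmetric]
        sum.distrib[symmetric] algebra_simps)
  then have "Re (cinner (x - s) (x - s)) =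
      Re (cinner x x) + (\<Sum>i\<in>I. Re (cnj (c i - a i) * (c i - a i)) - Re (cnj (a i) * a i))"
    by (simp add: Re_sum)
  then show ?thesis
    by (simp add: power2_norm_eq_cinner cmod_power2_eq_Re s_def a_def)
qed

lemma bessel_inequality:
  fixes v :: "'i \<Rightarrow> 'a::complex_inner"
  assumes "orthonormal_family v I" and "finite I"
  shows "(\<Sum>i\<in>I. (cmod (cinner (v i) x))\<^sup>2) \<le> (norm x)\<^sup>2"
  using norm_diff_combination_power2[OF assms, of x "\<lambda>i. cinner (v i) x"]
  by (simp add: sum_negf) (metis diff_ge_0_iff_ge zero_le_power2)

definition lin_combs :: "('i \<Rightarrow> 'a::complex_inner) \<Rightarrow> 'i set \<Rightarrow> 'a set" where
  "lin_combs v I = {y. \<exists>T c. finite T \<and> T \<subseteq> I \<and> y = (\<Sum>t\<in>T. c t *\<^sub>C v t)}"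

lemma lin_combs_mono: "I \<subseteq> J \<Longrightarrow> lin_combs v I \<subseteq> lin_combs v J"
  unfolding lin_combs_def by blast

lemma family_in_lin_combs: "i \<in> I \<Longrightarrow> v i \<in> lin_combs v I"
  unfolding lin_combs_def by (auto intro!: exI[of _ "{i}"] exI[of _ "\<lambda>_. 1"] simp: scaleC_one)

lemma lin_combs_finite_support:
  "y \<in> lin_combs v I \<Longrightarrow> \<exists>T. finite T \<and> T \<subseteq> I \<and> y \<in> lin_combs v T"
  unfolding lin_combs_def by blast

lemma lin_combs_finite_eq:
  assumes "finite I" and "y \<in> lin_combs v I"
  shows "\<exists>c. y = (\<Sum>i\<in>I. c i *\<^sub>C v i)"
proof -
  obtain T c where T: "T \<subseteq> I" and y: "y = (\<Sum>t\<in>T. c t *\<^sub>C v t)"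
    using assms(2) unfolding lin_combs_def by blast
  have "(\<Sum>i\<in>I. (if i \<in> T then c i else 0) *\<^sub>C v i) = (\<Sum>i\<in>I. if i \<in> T then c i *\<^sub>C v i else 0)"
    by (intro sum.cong) auto
  also have "\<dots> = (\<Sum>i\<in>I \<inter> T. c i *\<^sub>C v i)"
    using assms(1) by (rule sum.inter_restrict[symmetric])
  also have "I \<inter> T = T"
    using T by blast
  finally show ?thesis
    using y by metis
qed

lemma csubspace_lin_combs: "csubspace (lin_combs v I)"
  unfolding csubspace_def
proof (intro conjI ballI allI)
  show "0 \<in> lin_combs v I"
    unfolding lin_combs_def by (auto intro!: exI[of _ "{}"])
next
  fix x y assume x: "x \<in> lin_combs v I" and y: "y \<in> lin_combs v I"
  obtain T1 T2 where T: "finite T1" "T1 \<subseteq> I" "x \<in> lin_combs v T1"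
      "finite T2" "T2 \<subseteq> I" "y \<in> lin_combs v T2"
    using x y lin_combs_finite_support by metis
  have fin: "finite (T1 \<union> T2)"
    using T by simp
  have "x \<in> lin_combs v (T1 \<union> T2)" "y \<in> lin_combs v (T1 \<union> T2)"
    using T lin_combs_mono[of T1 "T1 \<union> T2" v] lin_combs_mono[of T2 "T1 \<union> T2" v] by auto
  then obtain c d where "x = (\<Sum>t\<in>T1 \<union> T2. c t *\<^sub>C v t)" "y = (\<Sum>t\<in>T1 \<union> T2. d t *\<^sub>C v t)"
    using lin_combs_finite_eq[OF fin, of x v] lin_combs_finite_eq[OF fin, of y v] by blast
  then have "x + y = (\<Sum>t\<in>T1 \<union> T2. (c t + d t) *\<^sub>C v t)"
    by (simp add: scaleC_add_left sum.distrib)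
  then show "x + y \<in> lin_combs v I"
    unfolding lin_combs_def using T fin
    by (intro CollectI exI[of _ "T1 \<union> T2"] exI[of _ "\<lambda>t. c t + d t"]) auto
next
  fix a x assume "x \<in> lin_combs v I"
  then obtain T c where "finite T" "T \<subseteq> I" "x = (\<Sum>t\<in>T. c t *\<^sub>C v t)"
    unfolding lin_combs_def by blast
  moreover have "a *\<^sub>C (\<Sum>t\<in>T. c t *\<^sub>C v t) = (\<Sum>t\<in>T. (a * c t) *\<^sub>C v t)"
    by (simp add: scaleC_sum_right scaleC_scaleC)
  ultimately show "a *\<^sub>C x \<in> lin_combs v I"
    unfolding lin_combs_def by (intro CollectI exI[of _ T] exI[of _ "\<lambda>t. a * c t"]) auto
qed

lemma closed_csubspace_closure:
  assumes S: "csubspace S"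
  shows "closed_csubspace (closure S)"
  unfolding closed_csubspace_def csubspace_def
proof (intro conjI ballI allI closed_closure)
  show "0 \<in> closure S"
    using S closure_subset unfolding csubspace_def by blast
next
  fix x y assume "x \<in> closure S" "y \<in> closure S"
  then have "x + y \<in> closure (S + S)"
    using closure_sum set_plus_intro by blast
  moreover have "S + S \<subseteq> S"
    using S unfolding csubspace_def by (auto elim!: set_plus_elim)
  ultimately show "x + y \<in> closure S"
    using closure_mono by blast
next
  fix a x assume "x \<in> closure S"
  then have "a *\<^sub>C x \<in> closure ((\<lambda>x. a *\<^sub>C x) ` S)"
    using closure_bounded_linear_image_subset[OF bounded_linear_scaleC_right] by blast
  moreover have "(\<lambda>x. a *\<^sub>C x) ` S \<subseteq> S"
    using S unfolding csubspace_def by blast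
  ultimately show "a *\<^sub>C x \<in> closure S"
    using closure_mono by blast
qed

lemma norm_power2_le_coeffs_add_dist:
  fixes v :: "'i \<Rightarrow> 'a::complex_inner"
  assumes on: "orthonormal_family v I" and fin: "finite I" and y: "y \<in> lin_combs v I"
  shows "(norm x)\<^sup>2 \<le> (\<Sum>i\<in>I. (cmod (cinner (v i) x))\<^sup>2) + (norm (x - y))\<^sup>2"
proof -
  obtain c where "y = (\<Sum>i\<in>I. c i *\<^sub>C v i)"
    using lin_combs_finite_eq[OF fin y] by blast
  moreover have "(\<Sum>i\<in>I. - (cmod (cinner (v i) x))\<^sup>2)
      \<le> (\<Sum>i\<in>I. (cmod (c i - cinner (v i) x))\<^sup>2 - (cmod (cinner (v i) x))\<^sup>2)"
    by (intro sum_mono) simp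
  ultimately show ?thesis
    using norm_diff_combination_power2[OF on fin, of x c] by (simp add: sum_negf)
qed

lemma closure_lin_combs_norm_power2_le:
  fixes v :: "'i \<Rightarrow> 'a::complex_inner"
  assumes on: "orthonormal_family v I" and x: "x \<in> closure (lin_combs v I)" and "\<epsilon> > 0"
  shows "\<exists>T. finite T \<and> T \<subseteq> I \<and> (norm x)\<^sup>2 \<le> (\<Sum>t\<in>T. (cmod (cinner (v t) x))\<^sup>2) + \<epsilon>"
proof -
  obtain y where y: "y \<in> lin_combs v I" and "dist y x < sqrt \<epsilon>"
    using x \<open>\<epsilon> > 0\<close> closure_approachable real_sqrt_gt_zero by blast
  then have "(norm (x - y))\<^sup>2 < (sqrt \<epsilon>)\<^sup>2"
    by (intro power_strict_mono) (auto simp: dist_norm norm_minus_commute)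
  then have "(norm (x - y))\<^sup>2 < \<epsilon>"
    using \<open>\<epsilon> > 0\<close> by simp
  obtain T where T: "finite T" "T \<subseteq> I" and "y \<in> lin_combs v T"
    using lin_combs_finite_support[OF y] by blast
  moreover have "orthonormal_family v T"
    using on T(2) by (rule orthonormal_family_subset)
  ultimately have "(norm x)\<^sup>2 \<le> (\<Sum>t\<in>T. (cmod (cinner (v t) x))\<^sup>2) + (norm (x - y))\<^sup>2"
    using norm_power2_le_coeffs_add_dist by blast
  with \<open>(norm (x - y))\<^sup>2 < \<epsilon>\<close> T show ?thesis
    by (intro exI[of _ T]) auto
qed

lemma closure_lin_combs_sum_norm_power2_le:
  fixes v :: "'i \<Rightarrow> 'a::complex_inner"
  assumes on: "orthonormal_family v I" and S: "finite S" "S \<subseteq> closure (lin_combs v I)"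
    and "\<epsilon> > 0"
  shows "\<exists>T. finite T \<and> T \<subseteq> I \<and>
    (\<Sum>x\<in>S. (norm x)\<^sup>2) \<le> (\<Sum>t\<in>T. \<Sum>x\<in>S. (cmod (cinner (v t) x))\<^sup>2) + \<epsilon>"
proof -
  define \<delta> where "\<delta> = \<epsilon> / (card S + 1)"
  have "\<delta> > 0" using \<open>\<epsilon> > 0\<close> by (simp add: \<delta>_def)
  then have "\<forall>x\<in>S. \<exists>T. finite T \<and> T \<subseteq> I \<and> (norm x)\<^sup>2 \<le> (\<Sum>t\<in>T. (cmod (cinner (v t) x))\<^sup>2) + \<delta>"
    using closure_lin_combs_norm_power2_le[OF on] S(2) by blast
  from bchoice[OF this] obtain Tx where Tx: "\<forall>x\<in>S. finite (Tx x) \<and> Tx x \<subseteq> I \<and>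
      (norm x)\<^sup>2 \<le> (\<Sum>t\<in>Tx x. (cmod (cinner (v t) x))\<^sup>2) + \<delta>"
    by blast
  define T where "T = (\<Union>x\<in>S. Tx x)"
  have T: "finite T" "T \<subseteq> I"
    using Tx S(1) by (auto simp: T_def)
  have "(\<Sum>x\<in>S. (norm x)\<^sup>2) \<le> (\<Sum>x\<in>S. (\<Sum>t\<in>T. (cmod (cinner (v t) x))\<^sup>2) + \<delta>)"
  proof (intro sum_mono)
    fix x assume x: "x \<in> S"
    have "(\<Sum>t\<in>Tx x. (cmod (cinner (v t) x))\<^sup>2) \<le> (\<Sum>t\<in>T. (cmod (cinner (v t) x))\<^sup>2)"
      using x T(1) by (intro sum_mono2) (auto simp: T_def)
    then show "(norm x)\<^sup>2 \<le> (\<Sum>t\<in>T. (cmod (cinner (v t) x))\<^sup>2) + \<delta>"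
      using Tx x by auto
  qed
  also have "\<dots> = (\<Sum>t\<in>T. \<Sum>x\<in>S. (cmod (cinner (v t) x))\<^sup>2) + card S * \<delta>"
    by (simp add: sum.distrib) (rule sum.swap)
  also have "card S * \<delta> \<le> \<epsilon>"
    using \<open>\<epsilon> > 0\<close> by (simp add: \<delta>_def field_simps)
  finally show ?thesis
    using T by auto
qed

lemma unitary_add: "unitary U \<Longrightarrow> U (x + y) = U x + U y"
  by (simp add: unitary_def clinear_def)

lemma unitary_scaleC: "unitary U \<Longrightarrow> U (a *\<^sub>C x) = a *\<^sub>C U x"
  by (simp add: unitary_def clinear_def)

lemma unitary_cinner: "unitary U \<Longrightarrow> cinner (U x) (U y) = cinner x y"
  by (simp add: unitary_def)

lemma unitary_zero: "unitary U \<Longrightarrow> U 0 = 0"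
  using unitary_scaleC[of U 0 0] by simp

lemma unitary_norm: "unitary U \<Longrightarrow> norm (U x) = norm x"
  by (metis power2_norm_eq_cinner unitary_cinner norm_ge_zero power2_eq_imp_eq)

lemma bounded_linear_unitary: "unitary U \<Longrightarrow> bounded_linear U"
  by (rule bounded_linear_intro[of _ 1])
    (simp_all add: unitary_add unitary_scaleC unitary_norm scaleR_scaleC)

lemma unitary_bij: "unitary U \<Longrightarrow> bij U"
proof -
  assume U: "unitary U"
  have "inj U"
    unfolding linear_inj_iff_eq_0[OF bounded_linear.linear[OF bounded_linear_unitary[OF U]]]
    by (metis U norm_eq_zero unitary_norm)
  then show "bij U"
    using U by (simp add: bij_def unitary_def)
qed

lemma unitary_adjoint: "unitary U \<Longrightarrow> cinner (U x) y = cinner x (inv U y)"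
  using unitary_cinner[of U x "inv U y"] by (simp add: unitary_def surj_f_inv_f)

lemma ccspan_least: "closed_csubspace N \<Longrightarrow> S \<subseteq> N \<Longrightarrow> ccspan S \<subseteq> N"
  unfolding ccspan_def by blast

lemma ccspan_superset: "S \<subseteq> ccspan S"
  unfolding ccspan_def by blast

lemma unitary_vimage_closed_csubspace:
  assumes U: "unitary U" and N: "closed_csubspace N"
  shows "closed_csubspace (U -` N)"
  unfolding closed_csubspace_def csubspace_def
proof (intro conjI ballI allI)
  show "0 \<in> U -` N"
    using N U by (simp add: closed_csubspace_def csubspace_def unitary_zero)
  show "x + y \<in> U -` N" if "x \<in> U -` N" "y \<in> U -` N" for x y
    using that N U by (simp add: closed_csubspace_def csubspace_def unitary_add)
  show "a *\<^sub>C x \<in> U -` N" if "x \<in> U -` N" for a x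
    using that N U by (simp add: closed_csubspace_def csubspace_def unitary_scaleC)
  show "closed (U -` N)"
    using N U by (intro continuous_closed_vimage linear_continuous_at bounded_linear_unitary)
      (simp_all add: closed_csubspace_def)
qed

lemma unitary_image_ccspan_subset:
  assumes "unitary U" "closed_csubspace N" "U ` S \<subseteq> N"
  shows "U ` ccspan S \<subseteq> N"
  using ccspan_least[OF unitary_vimage_closed_csubspace[OF assms(1,2)]] assms(3) by blast

lemma countable_orthonormal:
  fixes B :: "'a::complex_inner set"
  assumes sep: "separable_space TYPE('a)" and on: "orthonormal B"
  shows "countable B"
proof -
  obtain D :: "'a set" where D: "countable D" "closure D = UNIV"
    using sep unfolding separable_space_def by blast
  have "\<forall>e\<in>B. \<exists>d\<in>D. dist d e < 1/2"
    using D(2) closure_approachable[of _ D] by (metis UNIV_I half_gt_zero zero_less_one)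
  then obtain h where h: "\<forall>e\<in>B. h e \<in> D \<and> dist (h e) e < 1/2"
    by metis
  have "inj_on h B"
  proof (rule inj_onI, rule ccontr)
    fix e e' assume e: "e \<in> B" "e' \<in> B" "h e = h e'" and "e \<noteq> e'"
    then have "cinner (e - e') (e - e') = 2"
      using on unfolding orthonormal_def by (simp add: cinner_diff_left cinner_diff_right)
    then have sq: "(norm (e - e'))\<^sup>2 = 2"
      by (simp add: power2_norm_eq_cinner)
    have "e - e' = (h e' - e') - (h e - e)"
      using e(3) by simp
    then have "norm (e - e') \<le> norm (h e' - e') + norm (h e - e)"
      by (metis norm_triangle_ineq4)
    moreover have "dist (h e) e < 1/2" "dist (h e') e' < 1/2"
      using h e by auto
    ultimately have "norm (e - e') < 1"
      by (simp add: dist_norm)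
    then have "(norm (e - e'))\<^sup>2 < 1"
      by (simp add: power_less_one_iff)
    with sq show False by simp
  qed
  moreover have "countable (h ` B)"
    using h D(1) countable_subset[of "h ` B" D] by auto
  ultimately show ?thesis
    using countable_image_inj_on by blast
qed

lemma orthonormal_subset:
  assumes "orthonormal B" "A \<subseteq> B"
  shows "orthonormal A"
  using assms unfolding orthonormal_def subset_iff by simp

lemma sum_norm_power2_orthonormal: "orthonormal B \<Longrightarrow> (\<Sum>e\<in>B. (norm e)\<^sup>2) = card B"
  by (simp add: orthonormal_def power2_norm_eq_cinner)

lemma wandering_orthonormal_family:
  assumes wM: "wandering_subspace \<U> M" and U: "\<forall>U\<in>\<U>. unitary U"
    and B: "orthonormal B" "B \<subseteq> M" and \<phi>: "\<phi> ` I \<subseteq> \<U>" "inj_on \<phi> I"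
  shows "orthonormal_family (\<lambda>(i, x). \<phi> i x) (I \<times> B)"
proof -
  have "cinner (\<phi> i x) (\<phi> j y) = (if (i, x) = (j, y) then 1 else 0)"
    if "i \<in> I" "x \<in> B" "j \<in> I" "y \<in> B" for i x j y
  proof (cases "i = j")
    case True
    then have "cinner (\<phi> i x) (\<phi> j y) = cinner x y"
      using U \<phi>(1) that(1) by (auto intro: unitary_cinner)
    then show ?thesis
      using B(1) that True unfolding orthonormal_def by auto
  next
    case False
    then have "\<phi> i \<noteq> \<phi> j"
      using \<phi>(2) that inj_onD by metis
    then have "cinner (\<phi> i x) (\<phi> j y) = 0"
      using wM B(2) \<phi>(1) that unfolding wandering_subspace_def orthogonal_sets_def by blast
    then show ?thesis
      using False by simp
  qed
  then show ?thesis
    unfolding orthonormal_family_def by auto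
qed

lemma subset_orth_sum: "id \<in> G \<Longrightarrow> M \<subseteq> orth_sum G M"
  unfolding orth_sum_def using ccspan_superset by fastforce

lemma orth_sum_subset_closure_orbit_combs:
  assumes U: "\<forall>g\<in>G. unitary g" and K: "ccspan B = K"
  shows "orth_sum G K \<subseteq> closure (lin_combs (\<lambda>(g, f). g f) (G \<times> B))"
proof -
  let ?N = "closure (lin_combs (\<lambda>(g, f). g f) (G \<times> B))"
  have N: "closed_csubspace ?N"
    by (intro closed_csubspace_closure csubspace_lin_combs)
  have "g ` K \<subseteq> ?N" if "g \<in> G" for g
  proof -
    have "g ` B \<subseteq> ?N"
      using that family_in_lin_combs[of _ "G \<times> B" "\<lambda>(g, f). g f"] closure_subset by fastforce
    then show ?thesis
      using unitary_image_ccspan_subset[OF _ N] U K that by blast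
  qed
  then show ?thesis
    unfolding orth_sum_def by (intro ccspan_least[OF N]) blast
qed

lemma wandering_orbit_coeffs_le:
  assumes G: "unitary_group G" and wM: "wandering_subspace G M"
    and S: "orthonormal S" "S \<subseteq> M" "finite S" and T: "finite T" "T \<subseteq> G"
  shows "(\<Sum>g\<in>T. \<Sum>e\<in>S. (cmod (cinner (g f) e))\<^sup>2) \<le> (norm f)\<^sup>2"
proof -
  have U: "\<forall>g\<in>G. unitary g" and inv: "inv ` T \<subseteq> G"
    using G T(2) unfolding unitary_group_def by auto
  have "inj_on inv T"
  proof (rule inj_onI)
    fix g h assume "g \<in> T" "h \<in> T" "inv g = inv h"
    then show "g = h"
      using U T(2) inv_inv_eq[OF unitary_bij] by (metis subsetD)
  qed
  then have on: "orthonormal_family (\<lambda>(g, e). inv g e) (T \<times> S)"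
    using wandering_orthonormal_family[OF wM U S(1,2) inv] by blast
  have "cmod (cinner (g f) e) = cmod (cinner (inv g e) f)" if "g \<in> T" for g e
  proof -
    have "unitary g"
      using U T(2) that by blast
    then have "cinner (g f) e = cinner f (inv g e)"
      by (rule unitary_adjoint)
    then show ?thesis
      by (simp add: cinner_commute[of f "inv g e"])
  qed
  then have "(\<Sum>g\<in>T. \<Sum>e\<in>S. (cmod (cinner (g f) e))\<^sup>2) =
      (\<Sum>(g, e)\<in>T \<times> S. (cmod (cinner (inv g e) f))\<^sup>2)"
    by (simp add: sum.cartesian_product)
  also have "\<dots> \<le> (norm f)\<^sup>2"
    using bessel_inequality[OF on] T(1) S(3) by (simp add: case_prod_unfold)
  finally show ?thesis .
qed

lemma wandering_orbit_coeffs_sum_le_card: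
  assumes G: "unitary_group G" and wM: "wandering_subspace G M"
    and S: "orthonormal S" "S \<subseteq> M" "finite S" and BK: "orthonormal BK" "finite BK"
    and T: "finite T" "T \<subseteq> G \<times> BK"
  shows "(\<Sum>t\<in>T. \<Sum>e\<in>S. (cmod (cinner (case t of (g, f) \<Rightarrow> g f) e))\<^sup>2) \<le> card BK"
proof -
  have "(\<Sum>t\<in>T. \<Sum>e\<in>S. (cmod (cinner (case t of (g, f) \<Rightarrow> g f) e))\<^sup>2)
      \<le> (\<Sum>t\<in>fst ` T \<times> BK. \<Sum>e\<in>S. (cmod (cinner (case t of (g, f) \<Rightarrow> g f) e))\<^sup>2)"
  proof (rule sum_mono2)
    show "finite (fst ` T \<times> BK)"
      using T(1) BK(2) by simp
    show "T \<subseteq> fst ` T \<times> BK"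
      using T(2) by (auto simp: subset_iff mem_Times_iff)
  qed (intro sum_nonneg zero_le_power2)
  also have "\<dots> = (\<Sum>g\<in>fst ` T. \<Sum>f\<in>BK. \<Sum>e\<in>S. (cmod (cinner (g f) e))\<^sup>2)"
    by (simp add: sum.cartesian_product')
  also have "\<dots> = (\<Sum>f\<in>BK. \<Sum>g\<in>fst ` T. \<Sum>e\<in>S. (cmod (cinner (g f) e))\<^sup>2)"
    by (rule sum.swap)
  also have "\<dots> \<le> (\<Sum>f\<in>BK. (norm f)\<^sup>2)"
    using T by (intro sum_mono wandering_orbit_coeffs_le[OF G wM S]) auto
  also have "\<dots> = card BK"
    using BK(1) by (rule sum_norm_power2_orthonormal)
  finally show ?thesis .
qed

lemma wandering_finite_subset_card_le:
  assumes G: "unitary_group G" and wM: "wandering_subspace G M" and wK: "wandering_subspace G K"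
    and sub: "orth_sum G M \<subseteq> orth_sum G K"
    and BM: "orthonormal BM" "BM \<subseteq> M" and BK: "orthonormal_basis BK K" "finite BK"
    and S: "S \<subseteq> BM" "finite S"
  shows "card S \<le> card BK"
proof -
  have U: "\<forall>g\<in>G. unitary g" "id \<in> G"
    using G unfolding unitary_group_def by auto
  have BK': "orthonormal BK" "BK \<subseteq> K" "ccspan BK = K"
    using BK(1) unfolding orthonormal_basis_def by auto
  have S': "orthonormal S" "S \<subseteq> M"
    using orthonormal_subset BM S(1) by blast+
  have on: "orthonormal_family (\<lambda>(g, f). g f) (G \<times> BK)"
    using wandering_orthonormal_family[OF wK U(1) BK'(1,2), of id G] by simp
  have "S \<subseteq> orth_sum G M"
    using S'(2) subset_orth_sum[OF U(2)] by (rule order_trans)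
  also have "\<dots> \<subseteq> orth_sum G K"
    by (rule sub)
  also have "\<dots> \<subseteq> closure (lin_combs (\<lambda>(g, f). g f) (G \<times> BK))"
    by (rule orth_sum_subset_closure_orbit_combs[OF U(1) BK'(3)])
  finally have S_closure: "S \<subseteq> closure (lin_combs (\<lambda>(g, f). g f) (G \<times> BK))" .
  have "real (card S) \<le> real (card BK) + \<epsilon>" if \<epsilon>: "\<epsilon> > 0" for \<epsilon>
  proof -
    obtain T where T: "finite T" "T \<subseteq> G \<times> BK" and
      "(\<Sum>e\<in>S. (norm e)\<^sup>2) \<le> (\<Sum>t\<in>T. \<Sum>e\<in>S. (cmod (cinner (case t of (g, f) \<Rightarrow> g f) e))\<^sup>2) + \<epsilon>"
      using closure_lin_combs_sum_norm_power2_le[OF on S(2) S_closure \<epsilon>] by blast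
    then show ?thesis
      using wandering_orbit_coeffs_sum_le_card[OF G wM S' S(2) BK'(1) BK(2) T]
        sum_norm_power2_orthonormal[OF S'(1)]
      by linarith
  qed
  then have "real (card S) \<le> real (card BK)"
    by (rule field_le_epsilon)
  then show ?thesis
    by simp
qed

theorem lemma2p1:
  fixes G :: "('a::chilbert_space \<Rightarrow> 'a) set"
    and M K :: "'a set"
  assumes "separable_space TYPE('a)"
    and "unitary_group G"
    and "countable G"
    and "wandering_subspace G M"
    and "wandering_subspace G K"
    and "orth_sum G M \<subseteq> orth_sum G K"
  shows "\<forall>BM BK. orthonormal_basis BM M \<longrightarrow> orthonormal_basis BK K
           \<longrightarrow> (\<exists>f. inj_on f BM \<and> f ` BM \<subseteq> BK)"
proof (intro allI impI)
  fix BM BK assume BM: "orthonormal_basis BM M" and BK: "orthonormal_basis BK K"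
  have BM': "orthonormal BM" "BM \<subseteq> M"
    using BM unfolding orthonormal_basis_def by auto
  show "\<exists>f. inj_on f BM \<and> f ` BM \<subseteq> BK"
  proof (cases "finite BK")
    case True
    have "finite BM \<and> card BM \<le> card BK"
      using wandering_finite_subset_card_le[OF assms(2,4,5,6) BM' BK True]
      by (rule finite_if_finite_subsets_card_bdd)
    then show ?thesis
      using card_le_inj[OF _ True] by blast
  next
    case False
    obtain f :: "nat \<Rightarrow> 'a" where f: "inj f" "range f \<subseteq> BK"
      using infinite_countable_subset[OF False] by blast
    have "countable BM"
      using countable_orthonormal[OF assms(1) BM'(1)] .
    then have "inj_on (f \<circ> to_nat_on BM) BM"
      using f(1) by (intro comp_inj_on inj_on_to_nat_on) (auto intro: inj_on_subset)
    then show ?thesis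
      using f(2) by (intro exI[of _ "f \<circ> to_nat_on BM"]) auto
  qed
qed

end
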